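(* The singular locus of $O$ has ten irreducible components. The component $S_{(x_0,x_1)}$ is given by $$x_0-x_1=0,\qquad x_2^2+x_3^2+x_4^2-2x_2x_3-2x_2x_4-2x_3x_4=0$$ (and $w=0$), and the other nine components $S_{(x_i,x_j)}$, $0\le i<j\le4$, are obtained from it by permuting the coordinates $x_0,\ldots,x_4$.
   Context: Let $$\Delta'(x_0,\ldots,x_4):=\prod_{i_1,\ldots,i_4\in\{0,1\}}\big(\sqrt{x_0}+(-1)^{i_1}\sqrt{x_1}+(-1)^{i_2}\sqrt{x_2}+(-1)^{i_3}\sqrt{x_3}+(-1)^{i_4}\sqrt{x_4}\big)\in\mathbb{Q}[x_0,\ldots,x_4],$$ a symmetric form of degree $8$. $O$ is the double covering $\pi:O\to\mathbf{P}^4_{\mathbb{Q}}$ given by $w^2=(-3)\Delta'(x_0,\ldots,x_4)$, i.e. the hypersurface with this equation in the weighted projective space $\mathbf{P}(4,1,1,1,1,1)$ with coordinates $w,x_0,\ldots,x_4$, with $\pi$ the projection to $(x_0:\ldots:x_4)$. *)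

theory Defs
  imports "HOL-Analysis.Analysis" "HOL-Library.Numeral_Type"
begin

(* Points of the affine cone C^6 over the weighted projective space P(4,1,1,1,1,1):
   a point is a pair (w, x) with x :: complex^5; the coordinate x_i (0 <= i <= 4)
   is  x $ of_nat i. *)
type_synonym pt = "complex \<times> (complex ^ 5)"

definition xc :: "complex ^ 5 \<Rightarrow> nat \<Rightarrow> complex" where
  "xc x i = x $ (of_nat i :: 5)"

definition sgn_b :: "bool \<Rightarrow> complex" where
  "sgn_b b = (if b then -1 else 1)"

(* Delta'(x_0,...,x_4) = prod over sign choices of
   sqrt x0 +- sqrt x1 +- sqrt x2 +- sqrt x3 +- sqrt x4  (independent of the choice of roots) *)
definition Delta' :: "complex ^ 5 \<Rightarrow> complex" where
  "Delta' x = (\<Prod>(a,b,c,d)\<in>(UNIV :: (bool \<times> bool \<times> bool \<times> bool) set).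
      csqrt (xc x 0) + sgn_b a * csqrt (xc x 1) + sgn_b b * csqrt (xc x 2)
      + sgn_b c * csqrt (xc x 3) + sgn_b d * csqrt (xc x 4))"

definition F_O :: "pt \<Rightarrow> complex" where
  "F_O p = (fst p)^2 - (-3) * Delta' (snd p)"

definition coord_dirs :: "pt set" where
  "coord_dirs = {(1, 0)} \<union> {(0, axis k 1) | k. True}"

definition sing_cone_O :: "pt set" where
  "sing_cone_O = {p. F_O p = 0 \<and>
      (\<forall>e\<in>coord_dirs. ((\<lambda>t::complex. F_O (fst p + t * fst e, snd p + t *s snd e)) has_field_derivative 0) (at 0))}"

inductive_set poly_fun :: "(pt \<Rightarrow> complex) set" where
  pconst: "(\<lambda>p. c) \<in> poly_fun"
| pw: "(\<lambda>p. fst p) \<in> poly_fun"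
| px: "(\<lambda>p. snd p $ k) \<in> poly_fun"
| padd: "f \<in> poly_fun \<Longrightarrow> g \<in> poly_fun \<Longrightarrow> (\<lambda>p. f p + g p) \<in> poly_fun"
| pmult: "f \<in> poly_fun \<Longrightarrow> g \<in> poly_fun \<Longrightarrow> (\<lambda>p. f p * g p) \<in> poly_fun"

definition zariski_closed :: "pt set \<Rightarrow> bool" where
  "zariski_closed A \<longleftrightarrow> (\<exists>P \<subseteq> poly_fun. A = {p. \<forall>f\<in>P. f p = 0})"

definition zariski_irreducible :: "pt set \<Rightarrow> bool" where
  "zariski_irreducible S \<longleftrightarrow> S \<noteq> {} \<and>
     (\<forall>A B. zariski_closed A \<longrightarrow> zariski_closed B \<longrightarrow> S \<subseteq> A \<union> B \<longrightarrow> S \<subseteq> A \<or> S \<subseteq> B)"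

definition S_comp :: "nat \<Rightarrow> nat \<Rightarrow> pt set" where
  "S_comp i j = {(w, x). w = 0 \<and> xc x i = xc x j \<and>
      (let R = {0..<5} - {i, j} in
        (\<Sum>k\<in>R. (xc x k)^2) - (\<Sum>k\<in>R. \<Sum>l\<in>R - {k}. xc x k * xc x l) = 0)}"

end

theory Submission
  imports Defs
begin

text \<open>
  The sixteen linear forms \<open>L\<^sub>\<epsilon> = \<surd>x\<^sub>0 \<plusminus> \<surd>x\<^sub>1 \<plusminus> \<dots> \<plusminus> \<surd>x\<^sub>4\<close> multiply to \<open>\<Delta>'\<close>.
  For a fixed coordinate \<open>n\<close> they group into eight pairs whose products are, up to sign,
  \<open>A\<^sup>2 - x\<^sub>n\<close> with \<open>A\<close> independent of \<open>x\<^sub>n\<close>; so along the \<open>x\<^sub>n\<close>-axis \<open>\<Delta>'\<close> is a product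
  of eight affine functions of slope \<open>\<plusminus>1\<close>, and \<open>\<Delta>' = \<partial>\<^sub>n\<Delta>' = 0\<close> iff two of them vanish.

  Hence at a singular point two different forms \<open>L\<^sub>\<epsilon>\<close>, \<open>L\<^sub>\<delta>\<close> vanish. Their difference splits the
  indices into the set where the signs disagree and its complement, each with a vanishing
  partial sum. A part \<open>{i, j}\<close> gives \<open>x\<^sub>i = x\<^sub>j\<close>, and the remaining three roots satisfy
  \<open>\<surd>x\<^sub>k \<plusminus> \<surd>x\<^sub>l \<plusminus> \<surd>x\<^sub>m = 0\<close>, which is the quadric equation of \<open>S_comp i j\<close>
  (Heron's form). A part of size one forces some \<open>x\<^sub>i = 0\<close>, and the argument is repeated
  with the pairing for the coordinate \<open>i\<close>. Conversely, on \<open>S_comp i j\<close> these relations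
  produce two vanishing forms differing in three signs, which lie in different pairs for
  every \<open>n\<close> since the two forms of a pair differ in one or in four signs. Finally \<open>S_comp i j\<close> is the image of \<open>\<complex>\<^sup>3\<close> under
  \<open>(y, a, b) \<mapsto> (y, y, a\<^sup>2, b\<^sup>2, (a + b)\<^sup>2)\<close>, hence irreducible.
\<close>

lemma of_nat_5_eq_iff: "l < 5 \<Longrightarrow> n < 5 \<Longrightarrow> (of_nat l :: 5) = of_nat n \<longleftrightarrow> l = n"
  by (auto simp: less_Suc_eq eval_nat_numeral)

lemma obtain_nat_index_5:
  obtains n where "n < 5" "(k::5) = of_nat n"
proof (cases k rule: bit1_cases)
  case (of_int z)
  then have "k = of_nat (nat z)" "nat z < 5"
    by auto
  then show ?thesis
    using that by blast
qed

lemma xc_add_axis: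
  "l < 5 \<Longrightarrow> n < 5 \<Longrightarrow> xc (x + t *s axis (of_nat n) 1) l = xc x l + (if l = n then t else 0)"
  by (simp add: xc_def axis_def of_nat_5_eq_iff)

lemma vec_5_eqI:
  assumes "\<And>n. n < 5 \<Longrightarrow> xc x n = xc x' n"
  shows "x = x'"
proof -
  have "x $ k = x' $ k" for k
  proof -
    obtain n where "n < 5" "k = of_nat n"
      using obtain_nat_index_5 .
    then show ?thesis
      using assms unfolding xc_def by simp
  qed
  then show ?thesis
    by (simp add: vec_eq_iff)
qed

definition sqrt_coord :: "complex^5 \<Rightarrow> nat \<Rightarrow> complex" where
  "sqrt_coord x l = csqrt (xc x l)"

lemma sqrt_coord_sq [simp]: "(sqrt_coord x l)\<^sup>2 = xc x l"
  by (simp add: sqrt_coord_def)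

section \<open>Factorisation of \<open>\<Delta>'\<close>\<close>

definition sign_vec :: "bool \<times> bool \<times> bool \<times> bool \<Rightarrow> nat \<Rightarrow> complex" where
  "sign_vec e l = (case e of (a, b, c, d) \<Rightarrow>
     if l = 0 then 1 else if l = 1 then sgn_b a else if l = 2 then sgn_b b
     else if l = 3 then sgn_b c else sgn_b d)"

definition signed_sum :: "(nat \<Rightarrow> complex) \<Rightarrow> (nat \<Rightarrow> complex) \<Rightarrow> complex" where
  "signed_sum \<sigma> s = (\<Sum>l<5. \<sigma> l * s l)"

lemma sgn_b_simps [simp]: "sgn_b True = -1" "sgn_b False = 1" "sgn_b (\<not> a) = - sgn_b a"
  by (auto simp: sgn_b_def)

lemma sign_vec_0 [simp]: "sign_vec e 0 = 1"
  unfolding sign_vec_def by (auto split: prod.splits)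

lemma sign_vec_neq_0: "sign_vec e l \<noteq> 0"
  unfolding sign_vec_def sgn_b_def by (auto split: prod.splits)

lemma sign_vec_inj: "(\<And>l. l < 5 \<Longrightarrow> sign_vec e l = sign_vec e' l) \<Longrightarrow> e = e'"
proof -
  assume H: "\<And>l. l < 5 \<Longrightarrow> sign_vec e l = sign_vec e' l"
  obtain a b c d a' b' c' d' where e: "e = (a, b, c, d)" "e' = (a', b', c', d')"
    by (metis prod_cases4)
  have "sgn_b a = sgn_b a'" "sgn_b b = sgn_b b'" "sgn_b c = sgn_b c'" "sgn_b d = sgn_b d'"
    using H[of 1] H[of 2] H[of 3] H[of 4] by (auto simp: sign_vec_def e)
  then show ?thesis
    unfolding e sgn_b_def by (auto split: if_splits)
qed

lemma sum_lessThan_5: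
  "(\<Sum>l<(5::nat). f l) = f 0 + f 1 + f 2 + f 3 + (f 4 :: 'a::comm_monoid_add)"
  by (simp add: eval_nat_numeral lessThan_Suc ac_simps)

lemma signed_sum_remove:
  "n < 5 \<Longrightarrow> signed_sum \<sigma> s = \<sigma> n * s n + (\<Sum>l\<in>{..<5} - {n}. \<sigma> l * s l)"
  unfolding signed_sum_def by (subst sum.remove[of _ n]) auto

lemma Delta'_eq_prod_signed_sum: "Delta' x = (\<Prod>e\<in>UNIV. signed_sum (sign_vec e) (sqrt_coord x))"
  unfolding Delta'_def signed_sum_def sum_lessThan_5
  by (rule prod.cong) (auto simp: sign_vec_def sqrt_coord_def)

text \<open>For each coordinate \<open>n\<close>, the sign patterns \<open>pair_plus n h\<close> and \<open>pair_minus n h\<close> give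
  linear forms differing only in the relative sign of \<open>\<surd>x\<^sub>n\<close>; for \<open>n = 0\<close>, whose sign is
  normalised to \<open>+1\<close>, this means flipping all the other signs.\<close>

definition pair_plus :: "nat \<Rightarrow> bool \<times> bool \<times> bool \<Rightarrow> bool \<times> bool \<times> bool \<times> bool" where
  "pair_plus n h = (case h of (a, b, c) \<Rightarrow>
     if n = 0 then (False, a, b, c) else if n = 1 then (False, a, b, c) else if n = 2 then (a, False, b, c)
     else if n = 3 then (a, b, False, c) else (a, b, c, False))"

definition pair_minus :: "nat \<Rightarrow> bool \<times> bool \<times> bool \<Rightarrow> bool \<times> bool \<times> bool \<times> bool" where
  "pair_minus n h = (case h of (a, b, c) \<Rightarrow>
     if n = 0 then (True, \<not> a, \<not> b, \<not> c) else if n = 1 then (True, a, b, c) else if n = 2 then (a, True, b, c)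
     else if n = 3 then (a, b, True, c) else (a, b, c, True))"

lemma inj_pair_plus: "inj (pair_plus n)"
  unfolding inj_def pair_plus_def by auto

lemma inj_pair_minus: "inj (pair_minus n)"
  unfolding inj_def pair_minus_def by auto

lemma pair_plus_neq_minus: "pair_plus n h \<noteq> pair_minus n h'"
  unfolding pair_plus_def pair_minus_def by (auto split: prod.splits)

lemma range_pair_plus_Un_minus: "range (pair_plus n) \<union> range (pair_minus n) = UNIV"
proof -
  have "(a, b, c, d) \<in> range (pair_plus n) \<union> range (pair_minus n)" for a b c d
  proof -
    have "(a, b, c, d) =
       (if n = 0 then (if a then pair_minus n (\<not> b, \<not> c, \<not> d) else pair_plus n (b, c, d))
        else if n = 1 then (if a then pair_minus n (b, c, d) else pair_plus n (b, c, d))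
        else if n = 2 then (if b then pair_minus n (a, c, d) else pair_plus n (a, c, d))
        else if n = 3 then (if c then pair_minus n (a, b, d) else pair_plus n (a, b, d))
        else (if d then pair_minus n (a, b, c) else pair_plus n (a, b, c)))"
      unfolding pair_plus_def pair_minus_def by auto
    then show ?thesis
      by (metis (full_types) UnI1 UnI2 rangeI)
  qed
  then show ?thesis
    by (metis UNIV_eq_I prod_cases4)
qed

lemma pair_members_distinct:
  assumes "h \<noteq> h'" "e \<in> {pair_plus n h, pair_minus n h}" "e' \<in> {pair_plus n h', pair_minus n h'}"
  shows "e \<noteq> e'"
proof -
  have "pair_plus n h \<noteq> pair_plus n h'" "pair_minus n h \<noteq> pair_minus n h'"
    using assms(1) inj_pair_plus inj_pair_minus by (auto dest: injD)
  then show ?thesis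
    using assms(2,3) pair_plus_neq_minus by (metis insertE singletonD)
qed

lemma prod_UNIV_pairs:
  "(\<Prod>e\<in>UNIV. f e) = (\<Prod>h\<in>UNIV. f (pair_plus n h) * (f (pair_minus n h) :: 'a::comm_monoid_mult))"
proof -
  have "(\<Prod>e\<in>UNIV. f e) = (\<Prod>e\<in>range (pair_plus n) \<union> range (pair_minus n). f e)"
    by (simp add: range_pair_plus_Un_minus)
  also have "\<dots> = (\<Prod>e\<in>range (pair_plus n). f e) * (\<Prod>e\<in>range (pair_minus n). f e)"
    by (rule prod.union_disjoint) (auto, metis pair_plus_neq_minus)
  also have "\<dots> = (\<Prod>h\<in>UNIV. f (pair_plus n h)) * (\<Prod>h\<in>UNIV. f (pair_minus n h))"
    by (simp add: prod.reindex inj_pair_plus inj_pair_minus)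
  finally show ?thesis
    by (simp add: prod.distrib)
qed

lemma sign_vec_pair_at:
  "n \<noteq> 0 \<Longrightarrow> n < 5 \<Longrightarrow> sign_vec (pair_plus n h) n = 1 \<and> sign_vec (pair_minus n h) n = -1"
  by (cases h) (auto simp: sign_vec_def pair_plus_def pair_minus_def less_Suc_eq eval_nat_numeral)

lemma sign_vec_pair_off:
  "n \<noteq> 0 \<Longrightarrow> n < 5 \<Longrightarrow> l < 5 \<Longrightarrow> l \<noteq> n \<Longrightarrow> sign_vec (pair_minus n h) l = sign_vec (pair_plus n h) l"
  by (cases h) (auto simp: sign_vec_def pair_plus_def pair_minus_def less_Suc_eq eval_nat_numeral)

lemma sign_vec_pair_0:
  "l \<noteq> 0 \<Longrightarrow> sign_vec (pair_minus 0 h) l = - sign_vec (pair_plus 0 h) l"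
  by (cases h) (auto simp: sign_vec_def pair_plus_def pair_minus_def)

lemma sign_vec_pair_plus_fixed:
  "n < 5 \<Longrightarrow> sign_vec (pair_plus n h) n = 1 \<and> sign_vec (pair_plus n h) (if n = 0 then 1 else 0) = 1"
  by (cases h) (auto simp: sign_vec_pair_at sign_vec_def pair_plus_def)

definition pair_factor :: "nat \<Rightarrow> bool \<times> bool \<times> bool \<Rightarrow> complex^5 \<Rightarrow> complex" where
  "pair_factor n h x = signed_sum (sign_vec (pair_plus n h)) (sqrt_coord x)
                     * signed_sum (sign_vec (pair_minus n h)) (sqrt_coord x)"

lemma Delta'_eq_prod_pair_factor: "Delta' x = (\<Prod>h\<in>UNIV. pair_factor n h x)"
  unfolding Delta'_eq_prod_signed_sum pair_factor_def by (rule prod_UNIV_pairs)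

lemma pair_factor_eq_0_iff:
  "pair_factor n h x = 0 \<longleftrightarrow> (\<exists>e\<in>{pair_plus n h, pair_minus n h}. signed_sum (sign_vec e) (sqrt_coord x) = 0)"
  unfolding pair_factor_def by auto

definition pair_rest :: "nat \<Rightarrow> bool \<times> bool \<times> bool \<Rightarrow> (nat \<Rightarrow> complex) \<Rightarrow> complex" where
  "pair_rest n h s = (\<Sum>l\<in>{..<5} - {n}. sign_vec (pair_plus n h) l * s l)"

definition pair_sign :: "nat \<Rightarrow> complex" where
  "pair_sign n = (if n = 0 then -1 else 1)"

lemma signed_sum_pair_plus:
  "n < 5 \<Longrightarrow> signed_sum (sign_vec (pair_plus n h)) s = s n + pair_rest n h s"
  unfolding pair_rest_def by (cases "n = 0") (simp_all add: signed_sum_remove[of n] sign_vec_pair_at)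

lemma pair_factor_eq:
  assumes "n < 5"
  shows "pair_factor n h x = pair_sign n * ((pair_rest n h (sqrt_coord x))\<^sup>2 - xc x n)"
proof -
  let ?s = "sqrt_coord x" and ?A = "pair_rest n h (sqrt_coord x)"
  note plus = signed_sum_pair_plus[OF assms, of h ?s]
  show ?thesis
  proof (cases "n = 0")
    case True
    have minus: "signed_sum (sign_vec (pair_minus n h)) ?s = ?s n - ?A"
      using True unfolding pair_rest_def
      by (simp add: signed_sum_remove[of 0] sign_vec_pair_0 sum_negf[symmetric])
    show ?thesis
      using True unfolding pair_factor_def pair_sign_def plus minus
      by (simp add: sqrt_coord_sq[symmetric] algebra_simps power2_eq_square del: sqrt_coord_sq)
  next
    case False
    have minus: "signed_sum (sign_vec (pair_minus n h)) ?s = - ?s n + ?A"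
      using False assms unfolding pair_rest_def
      by (simp add: signed_sum_remove[of n] sign_vec_pair_at sign_vec_pair_off)
    show ?thesis
      using False unfolding pair_factor_def pair_sign_def plus minus
      by (simp add: sqrt_coord_sq[symmetric] algebra_simps power2_eq_square del: sqrt_coord_sq)
  qed
qed

lemma pair_factor_add_axis:
  assumes "n < 5"
  shows "pair_factor n h (x + t *s axis (of_nat n) 1) = pair_factor n h x - pair_sign n * t"
proof -
  let ?y = "x + t *s axis (of_nat n) 1"
  have "pair_rest n h (sqrt_coord ?y) = pair_rest n h (sqrt_coord x)"
    unfolding pair_rest_def by (rule sum.cong) (auto simp: sqrt_coord_def xc_add_axis assms)
  moreover have "xc ?y n = xc x n + t"
    by (simp add: xc_add_axis assms)
  ultimately show ?thesis
    using assms by (simp add: pair_factor_eq algebra_simps)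
qed

lemma has_field_derivative_Delta'_axis:
  assumes "n < 5"
  shows "((\<lambda>t. Delta' (x + t *s axis (of_nat n) 1)) has_field_derivative
           - pair_sign n * (\<Sum>h\<in>UNIV. \<Prod>h'\<in>UNIV - {h}. pair_factor n h' x)) (at 0)"
proof -
  have "((\<lambda>t. \<Prod>h\<in>UNIV. pair_factor n h x - pair_sign n * t) has_field_derivative
          (\<Sum>h\<in>UNIV. - pair_sign n * (\<Prod>h'\<in>UNIV - {h}. pair_factor n h' x - pair_sign n * 0))) (at 0)"
    by (rule has_field_derivative_prod) (auto intro!: derivative_eq_intros)
  then show ?thesis
    by (simp add: Delta'_eq_prod_pair_factor[of _ n] pair_factor_add_axis assms sum_distrib_left)
qed

lemma prod_and_sum_prod_remove_eq_0_iff: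
  fixes c :: "'b \<Rightarrow> 'a::idom"
  assumes "finite A"
  shows "(\<Prod>a\<in>A. c a) = 0 \<and> (\<Sum>a\<in>A. \<Prod>b\<in>A - {a}. c b) = 0
         \<longleftrightarrow> (\<exists>a\<in>A. \<exists>b\<in>A. a \<noteq> b \<and> c a = 0 \<and> c b = 0)"
proof
  assume H: "(\<Prod>a\<in>A. c a) = 0 \<and> (\<Sum>a\<in>A. \<Prod>b\<in>A - {a}. c b) = 0"
  then obtain a where a: "a \<in> A" "c a = 0"
    using assms by auto
  have "(\<Sum>g\<in>A. \<Prod>b\<in>A - {g}. c b) = (\<Prod>b\<in>A - {a}. c b) + (\<Sum>g\<in>A - {a}. \<Prod>b\<in>A - {g}. c b)"
    using assms a by (simp add: sum.remove)
  also have "(\<Sum>g\<in>A - {a}. \<Prod>b\<in>A - {g}. c b) = 0"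
    using assms a by (intro sum.neutral ballI) (auto simp: prod_zero_iff)
  finally have "(\<Prod>b\<in>A - {a}. c b) = 0"
    using H by simp
  with a assms show "\<exists>a\<in>A. \<exists>b\<in>A. a \<noteq> b \<and> c a = 0 \<and> c b = 0"
    by (auto simp: prod_zero_iff)
next
  assume "\<exists>a\<in>A. \<exists>b\<in>A. a \<noteq> b \<and> c a = 0 \<and> c b = 0"
  then obtain a b where ab: "a \<in> A" "b \<in> A" "a \<noteq> b" "c a = 0" "c b = 0"
    by blast
  have "(\<Prod>b\<in>A - {g}. c b) = 0" if "g \<in> A" for g
    using assms ab that by (cases "g = a") (auto simp: prod_zero_iff)
  then show "(\<Prod>a\<in>A. c a) = 0 \<and> (\<Sum>a\<in>A. \<Prod>b\<in>A - {a}. c b) = 0"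
    using assms ab by (auto simp: prod_zero_iff intro!: sum.neutral)
qed

lemma has_field_derivative_0_iff:
  "(f has_field_derivative D) (at x) \<Longrightarrow> (f has_field_derivative 0) (at x) \<longleftrightarrow> D = 0"
  by (metis DERIV_unique)

lemma has_field_derivative_F_O_w:
  "((\<lambda>t. F_O (fst p + t * 1, snd p + t *s 0)) has_field_derivative 2 * fst p) (at 0)"
proof -
  have "((\<lambda>t. (fst p + t)\<^sup>2 + 3 * Delta' (snd p)) has_field_derivative 2 * fst p) (at 0)"
    by (auto intro!: derivative_eq_intros)
  then show ?thesis
    by (simp add: F_O_def)
qed

lemma has_field_derivative_F_O_axis:
  assumes "n < 5"
  shows "((\<lambda>t. F_O (fst p + t * 0, snd p + t *s axis (of_nat n) 1)) has_field_derivative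
           - 3 * pair_sign n * (\<Sum>h\<in>UNIV. \<Prod>h'\<in>UNIV - {h}. pair_factor n h' (snd p))) (at 0)"
proof -
  have "((\<lambda>t. (fst p)\<^sup>2 + 3 * Delta' (snd p + t *s axis (of_nat n) 1)) has_field_derivative
          0 + 3 * (- pair_sign n * (\<Sum>h\<in>UNIV. \<Prod>h'\<in>UNIV - {h}. pair_factor n h' (snd p)))) (at 0)"
    by (intro DERIV_add DERIV_const DERIV_cmult has_field_derivative_Delta'_axis assms)
  then show ?thesis
    by (simp add: F_O_def mult.assoc)
qed

lemma coord_derivatives_vanish_iff:
  "(\<forall>e\<in>coord_dirs. ((\<lambda>t. F_O (fst p + t * fst e, snd p + t *s snd e)) has_field_derivative 0) (at 0))
   \<longleftrightarrow> fst p = 0 \<and> (\<forall>n<5. (\<Sum>h\<in>UNIV. \<Prod>h'\<in>UNIV - {h}. pair_factor n h' (snd p)) = 0)"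
    (is "(\<forall>e\<in>coord_dirs. ?D e) \<longleftrightarrow> _ \<and> (\<forall>n<5. ?cof n = 0)")
proof -
  have w: "?D (1, 0) \<longleftrightarrow> fst p = 0"
    using has_field_derivative_0_iff[OF has_field_derivative_F_O_w[of p]] by simp
  have axis: "?D (0, axis (of_nat n) 1) \<longleftrightarrow> ?cof n = 0" if "n < 5" for n
    using has_field_derivative_0_iff[OF has_field_derivative_F_O_axis[OF that, of p]]
    by (simp add: pair_sign_def)
  show ?thesis
  proof
    assume "\<forall>e\<in>coord_dirs. ?D e"
    moreover have "(1, 0) \<in> coord_dirs" "(0, axis (of_nat n) 1) \<in> coord_dirs" for n
      unfolding coord_dirs_def by auto
    ultimately show "fst p = 0 \<and> (\<forall>n<5. ?cof n = 0)"
      using w axis by blast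
  next
    assume H: "fst p = 0 \<and> (\<forall>n<5. ?cof n = 0)"
    show "\<forall>e\<in>coord_dirs. ?D e"
    proof
      fix e
      assume "e \<in> coord_dirs"
      then consider "e = (1, 0)" | k where "e = (0, axis k 1)"
        unfolding coord_dirs_def by blast
      then show "?D e"
      proof cases
        case 1
        then show ?thesis
          using w H by simp
      next
        case (2 k)
        obtain n where "n < 5" "k = of_nat n"
          using obtain_nat_index_5 .
        then show ?thesis
          using axis H 2 by simp
      qed
    qed
  qed
qed

definition two_pair_factors_vanish :: "nat \<Rightarrow> complex^5 \<Rightarrow> bool" where
  "two_pair_factors_vanish n x \<longleftrightarrow> (\<exists>h h'. h \<noteq> h' \<and> pair_factor n h x = 0 \<and> pair_factor n h' x = 0)"

lemma sing_cone_O_iff: "p \<in> sing_cone_O \<longleftrightarrow> fst p = 0 \<and> (\<forall>n<5. two_pair_factors_vanish n (snd p))"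
proof -
  have "Delta' (snd p) = 0 \<and> (\<Sum>h\<in>UNIV. \<Prod>h'\<in>UNIV - {h}. pair_factor n h' (snd p)) = 0
        \<longleftrightarrow> two_pair_factors_vanish n (snd p)" for n
    unfolding Delta'_eq_prod_pair_factor[of _ n] two_pair_factors_vanish_def
    by (subst prod_and_sum_prod_remove_eq_0_iff) auto
  moreover have "F_O p = 0 \<longleftrightarrow> (fst p)\<^sup>2 + 3 * Delta' (snd p) = 0"
    by (simp add: F_O_def)
  ultimately show ?thesis
    unfolding sing_cone_O_def coord_derivatives_vanish_iff by (auto intro: zero_less_numeral)
qed

definition heron :: "complex \<Rightarrow> complex \<Rightarrow> complex \<Rightarrow> complex" where
  "heron a b c = a\<^sup>2 + b\<^sup>2 + c\<^sup>2 - 2 * a * b - 2 * a * c - 2 * b * c"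

lemma heron_squares: "heron (a\<^sup>2) (b\<^sup>2) (c\<^sup>2) = (a + b + c) * (a + b - c) * (a - b + c) * (a - b - c)"
  unfolding heron_def by algebra

lemma heron_squares_eq_0_iff:
  "heron (a\<^sup>2) (b\<^sup>2) (c\<^sup>2) = 0 \<longleftrightarrow> (\<exists>\<beta> \<gamma>. \<beta> \<in> {1, -1} \<and> \<gamma> \<in> {1, -1} \<and> a + \<beta> * b + \<gamma> * c = 0)"
proof
  assume "heron (a\<^sup>2) (b\<^sup>2) (c\<^sup>2) = 0"
  then consider "a + b + c = 0" | "a + b - c = 0" | "a - b + c = 0" | "a - b - c = 0"
    unfolding heron_squares by auto
  then show "\<exists>\<beta> \<gamma>. \<beta> \<in> {1, -1} \<and> \<gamma> \<in> {1, -1} \<and> a + \<beta> * b + \<gamma> * c = 0"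
    by cases (force intro!: exI)+
next
  assume "\<exists>\<beta> \<gamma>. \<beta> \<in> {1, -1} \<and> \<gamma> \<in> {1, -1} \<and> a + \<beta> * b + \<gamma> * c = 0"
  then have "a + b + c = 0 \<or> a + b - c = 0 \<or> a - b + c = 0 \<or> a - b - c = 0"
    by auto
  then show "heron (a\<^sup>2) (b\<^sup>2) (c\<^sup>2) = 0"
    unfolding heron_squares by (elim disjE) simp_all
qed

definition S_quadric :: "complex^5 \<Rightarrow> nat \<Rightarrow> nat \<Rightarrow> complex" where
  "S_quadric x i j = (let R = {0..<5} - {i, j} in
      (\<Sum>k\<in>R. (xc x k)\<^sup>2) - (\<Sum>k\<in>R. \<Sum>l\<in>R - {k}. xc x k * xc x l))"

definition S_cond :: "complex^5 \<Rightarrow> nat \<Rightarrow> nat \<Rightarrow> bool" where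
  "S_cond x i j \<longleftrightarrow> xc x i = xc x j \<and> S_quadric x i j = 0"

lemma mem_S_comp_iff: "(w, x) \<in> S_comp i j \<longleftrightarrow> w = 0 \<and> S_cond x i j"
  unfolding S_comp_def S_cond_def S_quadric_def Let_def by simp

lemma S_cond_commute: "S_cond x i j \<longleftrightarrow> S_cond x j i"
  unfolding S_cond_def S_quadric_def by (auto simp: insert_commute)

lemma obtain_complement_triple:
  assumes "i < 5" "j < 5" "i \<noteq> j"
  obtains k l m where "distinct [i, j, k, l, m]" "{..<5} = {i, j, k, l, m}"
    "\<And>x. S_quadric x i j = heron (xc x k) (xc x l) (xc x m)"
proof -
  have "card ({0..<5::nat} - {i, j}) = 3"
    using assms by (subst card_Diff_subset) auto
  then obtain k l m where klm: "{0..<5} - {i, j} = {k, l, m}" "k \<noteq> l" "k \<noteq> m" "l \<noteq> m"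
    by (auto simp: card_3_iff)
  show ?thesis
  proof (rule that)
    show "distinct [i, j, k, l, m]"
      using assms(3) klm by auto
    show "{..<5} = {i, j, k, l, m}"
      using assms klm(1) by (auto simp: set_eq_iff)
    have "{k, l, m} - {k} = {l, m}" "{k, l, m} - {l} = {k, m}" "{k, l, m} - {m} = {k, l}"
      using klm(2-4) by auto
    then show "S_quadric x i j = heron (xc x k) (xc x l) (xc x m)" for x
      unfolding S_quadric_def Let_def klm(1) heron_def using klm(2-4)
      by (simp add: power2_eq_square algebra_simps)
  qed
qed

definition is_sign_vec :: "(nat \<Rightarrow> complex) \<Rightarrow> bool" where
  "is_sign_vec \<sigma> \<longleftrightarrow> (\<forall>l<5. \<sigma> l = 1 \<or> \<sigma> l = -1)"

definition disagree :: "(nat \<Rightarrow> complex) \<Rightarrow> (nat \<Rightarrow> complex) \<Rightarrow> nat set" where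
  "disagree \<sigma> \<tau> = {l\<in>{..<5}. \<sigma> l \<noteq> \<tau> l}"

definition zero_split :: "(nat \<Rightarrow> complex) \<Rightarrow> (nat \<Rightarrow> complex) \<Rightarrow> nat set \<Rightarrow> bool" where
  "zero_split \<sigma> s D \<longleftrightarrow> D \<subseteq> {..<5} \<and> (\<Sum>l\<in>D. \<sigma> l * s l) = 0 \<and> (\<Sum>l\<in>{..<5} - D. \<sigma> l * s l) = 0"

definition pair_split :: "complex^5 \<Rightarrow> bool" where
  "pair_split x \<longleftrightarrow> (\<exists>\<sigma> P. is_sign_vec \<sigma> \<and> zero_split \<sigma> (sqrt_coord x) P \<and> card P = 2)"

lemma is_sign_vec_sign_vec: "is_sign_vec (sign_vec e)"
  unfolding is_sign_vec_def sign_vec_def sgn_b_def by (auto split: prod.splits)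

lemma is_sign_vec_const: "is_sign_vec (\<lambda>_. 1)"
  unfolding is_sign_vec_def by simp

lemma is_sign_vec_fun_upd: "is_sign_vec \<sigma> \<Longrightarrow> v \<in> {1, -1} \<Longrightarrow> is_sign_vec (\<sigma>(a := v))"
  unfolding is_sign_vec_def by auto

lemma power2_sign_mult: "\<sigma> = 1 \<or> \<sigma> = -1 \<Longrightarrow> (\<sigma> * (a::complex))\<^sup>2 = a\<^sup>2"
  by (auto simp: power2_eq_square)

lemma zero_split_compl: "zero_split \<sigma> s D \<Longrightarrow> zero_split \<sigma> s ({..<5} - D)"
  unfolding zero_split_def by (simp add: double_diff)

lemma zero_split_insert:
  assumes "zero_split \<sigma> s D" "i < 5" "s i = 0"
  shows "zero_split \<sigma> s (insert i D)"
proof -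
  have D: "D \<subseteq> {..<5}" "(\<Sum>l\<in>D. \<sigma> l * s l) = 0" "(\<Sum>l\<in>{..<5} - D. \<sigma> l * s l) = 0"
    using assms(1) unfolding zero_split_def by auto
  then have "finite D"
    by (meson finite_lessThan finite_subset)
  then have "(\<Sum>l\<in>insert i D. \<sigma> l * s l) = 0"
    using D(2) assms(3) by (simp add: sum.insert_if)
  moreover have "(\<Sum>l\<in>{..<5} - insert i D. \<sigma> l * s l) = 0"
    using D(3) assms(3) by (simp add: sum_diff1 Diff_insert[of _ i D] del: Diff_insert0)
  ultimately show ?thesis
    using D(1) assms(2) unfolding zero_split_def by simp
qed

lemma zero_split_singleton:
  assumes "is_sign_vec \<sigma>" "zero_split \<sigma> s {i}"
  shows "i < 5" "s i = 0"
proof -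
  show "i < 5"
    using assms(2) unfolding zero_split_def by simp
  then have "\<sigma> i \<noteq> 0"
    using assms(1) unfolding is_sign_vec_def by fastforce
  then show "s i = 0"
    using assms(2) unfolding zero_split_def by simp
qed

lemma zero_split_disagree:
  assumes "is_sign_vec \<sigma>" "is_sign_vec \<tau>" "signed_sum \<sigma> s = 0" "signed_sum \<tau> s = 0"
  shows "zero_split \<sigma> s (disagree \<sigma> \<tau>)"
proof -
  let ?D = "disagree \<sigma> \<tau>"
  have "(\<Sum>l<5. (\<sigma> l - \<tau> l) * s l) = 0"
    using assms(3,4) unfolding signed_sum_def by (simp add: algebra_simps sum_subtractf)
  also have "(\<Sum>l<5. (\<sigma> l - \<tau> l) * s l) = (\<Sum>l\<in>?D. (\<sigma> l - \<tau> l) * s l)"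
    unfolding disagree_def by (intro sum.mono_neutral_right) auto
  also have "\<dots> = (\<Sum>l\<in>?D. 2 * (\<sigma> l * s l))"
    using assms(1,2) unfolding is_sign_vec_def disagree_def by (intro sum.cong) force+
  finally have D: "(\<Sum>l\<in>?D. \<sigma> l * s l) = 0"
    by (simp add: sum_distrib_left[symmetric])
  have "signed_sum \<sigma> s = (\<Sum>l\<in>?D. \<sigma> l * s l) + (\<Sum>l\<in>{..<5} - ?D. \<sigma> l * s l)"
    unfolding signed_sum_def disagree_def
    by (metis (no_types, lifting) add.commute finite_lessThan mem_Collect_eq subsetI sum.subset_diff)
  then show ?thesis
    using D assms(3) unfolding zero_split_def disagree_def by auto
qed

lemma S_cond_of_zero_split_pair:
  assumes "is_sign_vec \<sigma>" "zero_split \<sigma> (sqrt_coord x) {i, j}" "i \<noteq> j"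
  shows "S_cond x i j"
proof -
  let ?s = "sqrt_coord x"
  have ij: "i < 5" "j < 5"
    using assms(2) unfolding zero_split_def by auto
  obtain k l m where klm: "distinct [i, j, k, l, m]" "{..<5} = {i, j, k, l, m}"
    "\<And>x. S_quadric x i j = heron (xc x k) (xc x l) (xc x m)"
    using obtain_complement_triple[OF ij assms(3)] by metis
  have sign: "\<sigma> t = 1 \<or> \<sigma> t = -1" if "t \<in> {i, j, k, l, m}" for t
    using assms(1) klm(2) that unfolding is_sign_vec_def by blast
  have "\<sigma> i * ?s i = - (\<sigma> j * ?s j)"
    using assms(2,3) unfolding zero_split_def by (simp add: eq_neg_iff_add_eq_0)
  then have "(\<sigma> i * ?s i)\<^sup>2 = (\<sigma> j * ?s j)\<^sup>2"
    by simp
  then have "xc x i = xc x j"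
    using sign[of i] sign[of j] by (simp add: power2_sign_mult)
  moreover have "{..<5} - {i, j} = {k, l, m}"
    using klm(1,2) by auto
  then have "\<sigma> k * ?s k + \<sigma> l * ?s l + \<sigma> m * ?s m = 0"
    using assms(2) klm(1) unfolding zero_split_def by (simp add: add.assoc)
  then have "heron ((\<sigma> k * ?s k)\<^sup>2) ((\<sigma> l * ?s l)\<^sup>2) ((\<sigma> m * ?s m)\<^sup>2) = 0"
    by (subst heron_squares_eq_0_iff) (auto intro!: exI[of _ 1])
  then have "S_quadric x i j = 0"
    unfolding klm(3) by (simp add: power2_sign_mult sign)
  ultimately show ?thesis
    unfolding S_cond_def by simp
qed

lemma S_cond_of_pair_split:
  assumes "pair_split x"
  shows "\<exists>i j. i < j \<and> j < 5 \<and> S_cond x i j"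
proof -
  obtain \<sigma> i j where "is_sign_vec \<sigma>" "zero_split \<sigma> (sqrt_coord x) {i, j}" "i \<noteq> j"
    using assms unfolding pair_split_def by (metis card_2_iff)
  then have "S_cond x i j" "S_cond x j i" "i < 5" "j < 5"
    using S_cond_of_zero_split_pair S_cond_commute unfolding zero_split_def by blast+
  then show ?thesis
    using \<open>i \<noteq> j\<close> by (metis linorder_neqE_nat)
qed

section \<open>Singular points lie on some \<open>S_comp i j\<close>\<close>

lemma pair_split_or_zero_coord_of_zero_split:
  assumes "is_sign_vec \<sigma>" "zero_split \<sigma> (sqrt_coord x) D" "D \<noteq> {}" "0 \<notin> D"
  shows "pair_split x \<or> (\<exists>i<5. sqrt_coord x i = 0)"
proof -
  let ?C = "{..<5} - D"
  have C: "zero_split \<sigma> (sqrt_coord x) ?C"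
    using zero_split_compl[OF assms(2)] .
  have single: "\<exists>i<5. sqrt_coord x i = 0" if "zero_split \<sigma> (sqrt_coord x) P" "card P = 1" for P
  proof -
    obtain i where "P = {i}"
      using \<open>card P = 1\<close> by (auto simp: card_1_singleton_iff)
    then show ?thesis
      using that(1) zero_split_singleton[OF assms(1)] by blast
  qed
  have D: "D \<subseteq> {..<5}" "finite D"
    using assms(2) unfolding zero_split_def by (auto intro: finite_subset)
  then have "card D + card ?C = 5"
    using card_Diff_subset[OF D(2,1)] card_mono[OF _ D(1)] by simp
  moreover have "card D \<noteq> 0"
    using D(2) assms(3) by simp
  moreover have "0 \<in> ?C"
    using assms(4) by simp
  then have "card ?C \<noteq> 0"
    by (metis card_0_eq empty_iff finite_Diff finite_lessThan)
  ultimately consider "card D = 1" | "card D = 2" | "card ?C = 2" | "card ?C = 1"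
    by linarith
  then show ?thesis
    unfolding pair_split_def by cases (use assms(1,2) C single in blast)+
qed

lemma pair_split_of_zero_split_at_zero_coord:
  assumes "is_sign_vec \<sigma>" "zero_split \<sigma> (sqrt_coord x) D" "D \<noteq> {}"
    "i < 5" "sqrt_coord x i = 0" "i \<notin> D" "f < 5" "f \<noteq> i" "f \<notin> D"
  shows "pair_split x"
proof -
  let ?C = "{..<5} - insert i D"
  have C: "zero_split \<sigma> (sqrt_coord x) ?C"
    using zero_split_compl[OF zero_split_insert[OF assms(2,4,5)]] .
  have D: "insert i D \<subseteq> {..<5}" "finite D"
    using assms(2,4) unfolding zero_split_def by (auto intro: finite_subset)
  then have "card (insert i D) + card ?C = 5"
    using card_Diff_subset[of "insert i D"] card_mono[OF _ D(1)] by simp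
  moreover have "card (insert i D) = card D + 1" "card (insert i ?C) = card ?C + 1"
    using D(2) assms(6) by simp_all
  moreover have "card D \<noteq> 0"
    using D(2) assms(3) by simp
  moreover have "f \<in> ?C"
    using assms(7-9) by simp
  then have "card ?C \<noteq> 0"
    by (metis card_0_eq empty_iff finite_Diff finite_lessThan)
  ultimately consider "card (insert i D) = 2" | "card D = 2" | "card ?C = 2" | "card (insert i ?C) = 2"
    by linarith
  then show ?thesis
    unfolding pair_split_def by cases (use assms(1,2,4,5) C zero_split_insert in blast)+
qed

lemma pair_split_or_zero_coord:
  assumes "two_pair_factors_vanish 0 x"
  shows "pair_split x \<or> (\<exists>i<5. sqrt_coord x i = 0)"
proof -
  obtain h h' where hh: "h \<noteq> h'" "pair_factor 0 h x = 0" "pair_factor 0 h' x = 0"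
    using assms unfolding two_pair_factors_vanish_def by blast
  obtain e e' where e: "e \<in> {pair_plus 0 h, pair_minus 0 h}" "signed_sum (sign_vec e) (sqrt_coord x) = 0"
    and e': "e' \<in> {pair_plus 0 h', pair_minus 0 h'}" "signed_sum (sign_vec e') (sqrt_coord x) = 0"
    using hh(2,3) unfolding pair_factor_eq_0_iff by blast
  have "zero_split (sign_vec e) (sqrt_coord x) (disagree (sign_vec e) (sign_vec e'))"
    using zero_split_disagree is_sign_vec_sign_vec e(2) e'(2) by blast
  moreover have "disagree (sign_vec e) (sign_vec e') \<noteq> {}"
    using pair_members_distinct[OF hh(1) e(1) e'(1)] sign_vec_inj[of e e']
    unfolding disagree_def by auto
  moreover have "0 \<notin> disagree (sign_vec e) (sign_vec e')"
    unfolding disagree_def by simp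
  ultimately show ?thesis
    by (rule pair_split_or_zero_coord_of_zero_split[OF is_sign_vec_sign_vec])
qed

text \<open>If \<open>\<surd>x\<^sub>i = 0\<close>, each vanishing pair factor for the coordinate \<open>i\<close> makes both of its
  forms vanish; two such pairs give two forms which agree at \<open>i\<close> and at one more index.\<close>

lemma pair_split_of_zero_coord:
  assumes "i < 5" "sqrt_coord x i = 0" "two_pair_factors_vanish i x"
  shows "pair_split x"
proof -
  have root: "signed_sum (sign_vec (pair_plus i h)) (sqrt_coord x) = 0" if "pair_factor i h x = 0" for h
  proof -
    have "pair_rest i h (sqrt_coord x) = 0"
      using that assms(2) pair_factor_eq[OF assms(1)] sqrt_coord_sq[of x i]
      by (simp add: pair_sign_def split: if_splits)
    then show ?thesis
      using signed_sum_pair_plus[OF assms(1)] assms(2) by simp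
  qed
  obtain h h' where hh: "h \<noteq> h'" "pair_factor i h x = 0" "pair_factor i h' x = 0"
    using assms(3) unfolding two_pair_factors_vanish_def by blast
  let ?f = "if i = 0 then 1 else 0 :: nat"
  let ?D = "disagree (sign_vec (pair_plus i h)) (sign_vec (pair_plus i h'))"
  have "zero_split (sign_vec (pair_plus i h)) (sqrt_coord x) ?D"
    using zero_split_disagree is_sign_vec_sign_vec root hh(2,3) by blast
  moreover have "pair_plus i h \<noteq> pair_plus i h'"
    using hh(1) inj_pair_plus by (auto dest: injD)
  then have "?D \<noteq> {}"
    using sign_vec_inj[of "pair_plus i h" "pair_plus i h'"] unfolding disagree_def by auto
  moreover have "i \<notin> ?D" "?f \<notin> ?D"
    using sign_vec_pair_plus_fixed[OF assms(1)] unfolding disagree_def by simp_all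
  moreover have "?f < 5" "?f \<noteq> i"
    by auto
  ultimately show ?thesis
    using pair_split_of_zero_split_at_zero_coord[OF is_sign_vec_sign_vec _ _ assms(1,2)] by blast
qed

lemma S_cond_of_two_pair_factors_vanish:
  assumes "\<forall>n<5. two_pair_factors_vanish n x"
  shows "\<exists>i j. i < j \<and> j < 5 \<and> S_cond x i j"
proof -
  have "two_pair_factors_vanish 0 x"
    using assms by simp
  then consider "pair_split x" | i where "i < 5" "sqrt_coord x i = 0"
    using pair_split_or_zero_coord by blast
  then have "pair_split x"
    by cases (use pair_split_of_zero_coord assms in auto)
  then show ?thesis
    by (rule S_cond_of_pair_split)
qed

section \<open>Points of \<open>S_comp i j\<close> are singular\<close>

lemma card_disagree_same_pair:
  assumes "n < 5" "e \<in> {pair_plus n h, pair_minus n h}" "e' \<in> {pair_plus n h, pair_minus n h}" "e \<noteq> e'"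
  shows "card (disagree (sign_vec e) (sign_vec e')) \<in> {1, 4}"
proof -
  let ?D = "\<lambda>e e'. disagree (sign_vec e) (sign_vec e')"
  have "?D (pair_plus n h) (pair_minus n h) = (if n = 0 then {1, 2, 3, 4} else {n})"
  proof (cases "n = 0")
    case True
    have "sign_vec (pair_plus 0 h) l \<noteq> - sign_vec (pair_plus 0 h) l" for l
      using sign_vec_neq_0 by (metis add.inverse_inverse eq_neg_iff_add_eq_0 mult_2 mult_eq_0_iff
          zero_neq_numeral)
    then show ?thesis
      using True unfolding disagree_def by (auto simp: sign_vec_pair_0 lessThan_nat_numeral)
  next
    case False
    have "l \<in> ?D (pair_plus n h) (pair_minus n h) \<longleftrightarrow> l = n" for l
      using assms(1) sign_vec_pair_at[OF False assms(1), of h] sign_vec_pair_off[OF False assms(1), of l h]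
      unfolding disagree_def by (cases "l = n") auto
    then show ?thesis
      using False by auto
  qed
  moreover have "?D e e' = ?D (pair_plus n h) (pair_minus n h)"
    using assms(2-4) unfolding disagree_def by auto
  ultimately show ?thesis
    by simp
qed

lemma obtain_normalized_sign_vec:
  assumes "is_sign_vec \<sigma>"
  obtains e where "\<And>l. l < 5 \<Longrightarrow> sign_vec e l = \<sigma> 0 * \<sigma> l"
proof -
  have sgn: "sgn_b (\<sigma> 0 * \<sigma> l = -1) = \<sigma> 0 * \<sigma> l" if "l < 5" for l
  proof -
    have "\<sigma> 0 = 1 \<or> \<sigma> 0 = -1" "\<sigma> l = 1 \<or> \<sigma> l = -1"
      using assms that unfolding is_sign_vec_def by auto
    then show ?thesis
      unfolding sgn_b_def by auto
  qed
  have "\<sigma> 0 * \<sigma> 0 = 1"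
    using assms unfolding is_sign_vec_def by force
  then have "sign_vec (\<sigma> 0 * \<sigma> 1 = -1, \<sigma> 0 * \<sigma> 2 = -1, \<sigma> 0 * \<sigma> 3 = -1, \<sigma> 0 * \<sigma> 4 = -1) l
               = \<sigma> 0 * \<sigma> l" if "l < 5" for l
    using that sgn by (auto simp: sign_vec_def less_Suc_eq eval_nat_numeral)
  then show ?thesis
    using that by blast
qed

lemma card_disagree_normalized:
  assumes "is_sign_vec \<sigma>" "is_sign_vec \<tau>" "card (disagree \<sigma> \<tau>) \<in> {2, 3}"
  shows "card (disagree (\<lambda>l. \<sigma> 0 * \<sigma> l) (\<lambda>l. \<tau> 0 * \<tau> l)) \<in> {2, 3}"
proof (cases "\<sigma> 0 = \<tau> 0")
  case True
  have "\<sigma> 0 \<noteq> 0"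
    using assms(1) unfolding is_sign_vec_def by force
  then show ?thesis
    using True assms(3) unfolding disagree_def by simp
next
  case False
  have signs: "\<sigma> l = 1 \<or> \<sigma> l = -1" "\<tau> l = 1 \<or> \<tau> l = -1" if "l < 5" for l
    using assms(1,2) that unfolding is_sign_vec_def by auto
  have "\<tau> 0 = - \<sigma> 0"
    using False signs[of 0] by auto
  then have "\<sigma> 0 * \<sigma> l \<noteq> \<tau> 0 * \<tau> l \<longleftrightarrow> \<sigma> l = \<tau> l" if "l < 5" for l
    using signs[OF that] signs[of 0] by auto
  then have compl: "disagree (\<lambda>l. \<sigma> 0 * \<sigma> l) (\<lambda>l. \<tau> 0 * \<tau> l) = {..<5} - disagree \<sigma> \<tau>"
    unfolding disagree_def by auto
  have "card ({..<5} - disagree \<sigma> \<tau>) = 5 - card (disagree \<sigma> \<tau>)"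
    unfolding disagree_def by (subst card_Diff_subset) auto
  moreover have "card (disagree \<sigma> \<tau>) = 2 \<or> card (disagree \<sigma> \<tau>) = 3"
    using assms(3) by simp
  ultimately show ?thesis
    unfolding compl by auto
qed

lemma pair_factor_vanishes_of_root:
  assumes "\<And>l. l < 5 \<Longrightarrow> sign_vec e l = \<rho> 0 * \<rho> l" "signed_sum \<rho> (sqrt_coord x) = 0"
  obtains h where "e \<in> {pair_plus n h, pair_minus n h}" "pair_factor n h x = 0"
proof -
  have "signed_sum (sign_vec e) (sqrt_coord x) = \<rho> 0 * signed_sum \<rho> (sqrt_coord x)"
    unfolding signed_sum_def using assms(1) by (simp add: sum_distrib_left mult.assoc)
  then have "signed_sum (sign_vec e) (sqrt_coord x) = 0"
    using assms(2) by simp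
  moreover have "e \<in> range (pair_plus n) \<union> range (pair_minus n)"
    by (simp add: range_pair_plus_Un_minus)
  then obtain h where "e \<in> {pair_plus n h, pair_minus n h}"
    by blast
  ultimately show ?thesis
    using that unfolding pair_factor_eq_0_iff by blast
qed

lemma two_pair_factors_vanish_of_roots:
  assumes "is_sign_vec \<sigma>" "is_sign_vec \<tau>"
    "signed_sum \<sigma> (sqrt_coord x) = 0" "signed_sum \<tau> (sqrt_coord x) = 0"
    "card (disagree \<sigma> \<tau>) \<in> {2, 3}" "n < 5"
  shows "two_pair_factors_vanish n x"
proof -
  obtain e e' where e: "\<And>l. l < 5 \<Longrightarrow> sign_vec e l = \<sigma> 0 * \<sigma> l"
    and e': "\<And>l. l < 5 \<Longrightarrow> sign_vec e' l = \<tau> 0 * \<tau> l"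
    using obtain_normalized_sign_vec assms(1,2) by metis
  obtain h h' where h: "e \<in> {pair_plus n h, pair_minus n h}" "pair_factor n h x = 0"
    and h': "e' \<in> {pair_plus n h', pair_minus n h'}" "pair_factor n h' x = 0"
    using pair_factor_vanishes_of_root[OF e assms(3)] pair_factor_vanishes_of_root[OF e' assms(4)]
    by metis
  have "disagree (sign_vec e) (sign_vec e') = disagree (\<lambda>l. \<sigma> 0 * \<sigma> l) (\<lambda>l. \<tau> 0 * \<tau> l)"
    unfolding disagree_def by (rule Collect_cong) (use e e' in auto)
  then have card: "card (disagree (sign_vec e) (sign_vec e')) \<in> {2, 3}"
    using card_disagree_normalized[OF assms(1,2,5)] by simp
  have "h \<noteq> h'"
  proof
    assume "h = h'"
    moreover have "e \<noteq> e'"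
      using card unfolding disagree_def by auto
    ultimately have "card (disagree (sign_vec e) (sign_vec e')) \<in> {1, 4}"
      using card_disagree_same_pair[OF assms(6) h(1)] h'(1) by simp
    then show False
      using card by auto
  qed
  then show ?thesis
    unfolding two_pair_factors_vanish_def using h(2) h'(2) by blast
qed

lemma obtain_signed_roots_of_S_cond:
  assumes "S_cond x i j" "\<And>x. S_quadric x i j = heron (xc x k) (xc x l) (xc x m)"
  obtains \<alpha> \<beta> \<gamma> where "\<alpha> \<in> {1, -1}" "\<beta> \<in> {1, -1}" "\<gamma> \<in> {1, -1}"
    "sqrt_coord x i - \<alpha> * sqrt_coord x j = 0"
    "sqrt_coord x k + \<beta> * sqrt_coord x l + \<gamma> * sqrt_coord x m = 0"
proof -
  let ?s = "sqrt_coord x"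
  have "(?s i)\<^sup>2 = (?s j)\<^sup>2"
    using assms(1) unfolding S_cond_def by simp
  then have "?s i = ?s j \<or> ?s i = - ?s j"
    by (simp only: power2_eq_iff)
  then have "\<exists>\<alpha>\<in>{1, -1}. ?s i - \<alpha> * ?s j = 0"
    by auto
  moreover have "heron ((?s k)\<^sup>2) ((?s l)\<^sup>2) ((?s m)\<^sup>2) = 0"
    using assms unfolding S_cond_def by simp
  ultimately show ?thesis
    using that unfolding heron_squares_eq_0_iff by blast
qed

lemma two_pair_factors_vanish_of_S_cond:
  assumes "S_cond x i j" "i < 5" "j < 5" "i \<noteq> j" "n < 5"
  shows "two_pair_factors_vanish n x"
proof -
  let ?s = "sqrt_coord x"
  obtain k l m where klm: "distinct [i, j, k, l, m]" "{..<5} = {i, j, k, l, m}"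
    "\<And>x. S_quadric x i j = heron (xc x k) (xc x l) (xc x m)"
    using obtain_complement_triple[OF assms(2-4)] by metis
  obtain \<alpha> \<beta> \<gamma> where signs: "\<alpha> \<in> {1, -1}" "\<beta> \<in> {1, -1}" "\<gamma> \<in> {1, -1}"
    and roots: "?s i - \<alpha> * ?s j = 0" "?s k + \<beta> * ?s l + \<gamma> * ?s m = 0"
    using obtain_signed_roots_of_S_cond[OF assms(1) klm(3)] by metis
  define \<sigma> where "\<sigma> = (\<lambda>_. 1::complex)(j := -\<alpha>, l := \<beta>, m := \<gamma>)"
  define \<tau> where "\<tau> = (\<lambda>_. 1::complex)(j := -\<alpha>, k := -1, l := -\<beta>, m := -\<gamma>)"
  have \<sigma>: "\<sigma> i = 1" "\<sigma> j = -\<alpha>" "\<sigma> k = 1" "\<sigma> l = \<beta>" "\<sigma> m = \<gamma>"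
    and \<tau>: "\<tau> i = 1" "\<tau> j = -\<alpha>" "\<tau> k = -1" "\<tau> l = -\<beta>" "\<tau> m = -\<gamma>"
    using klm(1) unfolding \<sigma>_def \<tau>_def by auto
  have sum: "signed_sum \<rho> ?s = \<rho> i * ?s i + \<rho> j * ?s j + \<rho> k * ?s k + \<rho> l * ?s l + \<rho> m * ?s m" for \<rho>
    unfolding signed_sum_def klm(2) using klm(1) by (simp add: algebra_simps)
  have "signed_sum \<sigma> ?s = (?s i - \<alpha> * ?s j) + (?s k + \<beta> * ?s l + \<gamma> * ?s m)"
    "signed_sum \<tau> ?s = (?s i - \<alpha> * ?s j) - (?s k + \<beta> * ?s l + \<gamma> * ?s m)"
    unfolding sum \<sigma> \<tau> by (simp_all add: algebra_simps)
  then have "signed_sum \<sigma> ?s = 0" "signed_sum \<tau> ?s = 0"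
    using roots by simp_all
  moreover have "is_sign_vec \<sigma>" "is_sign_vec \<tau>"
    unfolding \<sigma>_def \<tau>_def using signs by (intro is_sign_vec_fun_upd is_sign_vec_const; auto)+
  moreover have "\<sigma> t \<noteq> \<tau> t \<longleftrightarrow> t \<in> {k, l, m}" if "t \<in> {i, j, k, l, m}" for t
    using that \<sigma> \<tau> signs(2,3) by auto
  then have "disagree \<sigma> \<tau> = {k, l, m}"
    unfolding disagree_def klm(2) by blast
  then have "card (disagree \<sigma> \<tau>) = 3"
    using klm(1) by simp
  ultimately show ?thesis
    using two_pair_factors_vanish_of_roots assms(5) by simp
qed

lemma sing_cone_O_eq_Union_S_comp: "sing_cone_O = \<Union>{S_comp i j | i j. i < j \<and> j < 5}"
proof (intro set_eqI)
  fix p :: pt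
  obtain w x where p: "p = (w, x)"
    by (cases p)
  have "(\<forall>n<5. two_pair_factors_vanish n x) \<longleftrightarrow> (\<exists>i j. i < j \<and> j < 5 \<and> S_cond x i j)"
  proof
    assume "\<exists>i j. i < j \<and> j < 5 \<and> S_cond x i j"
    then obtain i j where "i < j" "j < 5" "S_cond x i j"
      by blast
    then show "\<forall>n<5. two_pair_factors_vanish n x"
      using two_pair_factors_vanish_of_S_cond[of x i j] by simp
  qed (rule S_cond_of_two_pair_factors_vanish)
  moreover have "p \<in> \<Union>{S_comp i j | i j. i < j \<and> j < 5} \<longleftrightarrow> (\<exists>i j. i < j \<and> j < 5 \<and> p \<in> S_comp i j)"
    by blast
  ultimately show "p \<in> sing_cone_O \<longleftrightarrow> p \<in> \<Union>{S_comp i j | i j. i < j \<and> j < 5}"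
    unfolding p sing_cone_O_iff mem_S_comp_iff fst_conv snd_conv by blast
qed

section \<open>Irreducible components\<close>

definition S_param :: "nat \<Rightarrow> nat \<Rightarrow> nat \<Rightarrow> nat \<Rightarrow> complex \<Rightarrow> complex \<Rightarrow> complex \<Rightarrow> pt" where
  "S_param i j k l y a b = (0, \<chi> t. if t = of_nat i \<or> t = of_nat j then y else if t = of_nat k then a\<^sup>2
      else if t = of_nat l then b\<^sup>2 else (a + b)\<^sup>2)"

lemma xc_S_param:
  assumes "n < 5" "i < 5" "j < 5" "k < 5" "l < 5"
  shows "xc (snd (S_param i j k l y a b)) n =
    (if n = i \<or> n = j then y else if n = k then a\<^sup>2 else if n = l then b\<^sup>2 else (a + b)\<^sup>2)"
  using assms by (simp add: S_param_def xc_def of_nat_5_eq_iff)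

lemma S_param_mem:
  assumes "distinct [i, j, k, l, m]" "{..<5} = {i, j, k, l, m}"
    "\<And>x. S_quadric x i j = heron (xc x k) (xc x l) (xc x m)"
  shows "S_param i j k l y a b \<in> S_comp i j"
proof -
  let ?x = "snd (S_param i j k l y a b)"
  have lt: "i < 5" "j < 5" "k < 5" "l < 5" "m < 5"
    using assms(2) by auto
  have "xc ?x i = y" "xc ?x j = y" "xc ?x k = a\<^sup>2" "xc ?x l = b\<^sup>2" "xc ?x m = (a + b)\<^sup>2"
    using assms(1) lt by (auto simp: xc_S_param)
  then have "S_cond ?x i j"
    unfolding S_cond_def assms(3) by (simp add: heron_squares)
  then show ?thesis
    using mem_S_comp_iff[of 0 ?x] by (simp add: S_param_def)
qed

lemma S_param_surj:
  assumes "distinct [i, j, k, l, m]" "{..<5} = {i, j, k, l, m}"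
    "\<And>x. S_quadric x i j = heron (xc x k) (xc x l) (xc x m)" "p \<in> S_comp i j"
  shows "\<exists>y a b. p = S_param i j k l y a b"
proof -
  obtain x where p: "p = (0, x)" and S: "S_cond x i j"
    using assms(4) mem_S_comp_iff by (metis surj_pair)
  let ?s = "sqrt_coord x"
  have lt: "i < 5" "j < 5" "k < 5" "l < 5" "m < 5"
    using assms(2) by auto
  have "heron ((?s k)\<^sup>2) ((?s l)\<^sup>2) ((?s m)\<^sup>2) = 0"
    using S assms(3) unfolding S_cond_def by simp
  then obtain \<beta> \<gamma> where \<beta>\<gamma>: "\<beta> \<in> {1, -1}" "\<gamma> \<in> {1, -1}" "?s k + \<beta> * ?s l + \<gamma> * ?s m = 0"
    unfolding heron_squares_eq_0_iff by blast
  have "xc x m = (\<gamma> * ?s m)\<^sup>2"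
    using \<beta>\<gamma>(2) by (auto simp: power2_sign_mult)
  also have "\<gamma> * ?s m = - (?s k + \<beta> * ?s l)"
    using \<beta>\<gamma>(3) by algebra
  finally have xm: "xc x m = (?s k + \<beta> * ?s l)\<^sup>2"
    by (simp only: power2_minus)
  have xl: "xc x l = (\<beta> * ?s l)\<^sup>2"
    using \<beta>\<gamma>(1) by (auto simp: power2_sign_mult)
  have "x = snd (S_param i j k l (xc x i) (?s k) (\<beta> * ?s l))"
  proof (rule vec_5_eqI)
    fix n :: nat
    assume "n < 5"
    then have "n \<in> {i, j, k, l, m}"
      using assms(2) by auto
    then show "xc x n = xc (snd (S_param i j k l (xc x i) (?s k) (\<beta> * ?s l))) n"
      using S assms(1) lt xm xl unfolding S_cond_def xc_S_param[OF \<open>n < 5\<close> lt(1-4)] by auto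
  qed
  then show ?thesis
    unfolding p S_param_def by auto
qed

lemma S_comp_not_subset:
  assumes "i < j" "j < 5" "k < l" "l < 5" "(i, j) \<noteq> (k, l)"
  shows "\<not> S_comp i j \<subseteq> S_comp k l"
proof
  assume sub: "S_comp i j \<subseteq> S_comp k l"
  have "i < 5" "i \<noteq> j"
    using assms(1,2) by simp_all
  then obtain a b c where abc: "distinct [i, j, a, b, c]" "{..<5} = {i, j, a, b, c}"
    "\<And>x. S_quadric x i j = heron (xc x a) (xc x b) (xc x c)"
    using obtain_complement_triple assms(2) by metis
  let ?x = "snd (S_param i j a b 25 1 2)"
  have lt: "i < 5" "j < 5" "a < 5" "b < 5" "c < 5"
    using abc(2) by auto
  have val: "xc ?x i = 25" "xc ?x j = 25" "xc ?x a = 1" "xc ?x b = 4" "xc ?x c = 9"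
    using abc(1) lt by (auto simp: xc_S_param)
  have "S_param i j a b 25 1 2 = (0, ?x)"
    unfolding S_param_def by simp
  then have "(0, ?x) \<in> S_comp k l"
    using sub S_param_mem[OF abc] by (metis subsetD)
  then have eq: "xc ?x k = xc ?x l"
    by (simp add: mem_S_comp_iff S_cond_def)
  have "k \<in> {..<5}" "l \<in> {..<5}"
    using assms(3,4) by simp_all
  then have "k \<in> {i, j, a, b, c}" "l \<in> {i, j, a, b, c}"
    unfolding abc(2) .
  then have "k \<in> {i, j} \<and> l \<in> {i, j}"
    using eq val assms(3) by auto
  then have "{k, l} = {i, j}"
    using assms(1,3) by auto
  then show False
    using assms by (auto simp: doubleton_eq_iff)
qed

lemma card_S_comps: "card {S_comp i j | i j. i < j \<and> j < 5} = 10"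
proof -
  let ?I = "{(i, j). i < j \<and> j < (5::nat)}"
  have "{S_comp i j | i j. i < j \<and> j < 5} = (\<lambda>(i, j). S_comp i j) ` ?I"
    by auto
  moreover have "inj_on (\<lambda>(i, j). S_comp i j) ?I"
    using S_comp_not_subset by (intro inj_onI) fastforce
  moreover have "?I = {(0,1), (0,2), (0,3), (0,4), (1,2), (1,3), (1,4), (2,3), (2,4), (3,4)}"
    by (auto simp: less_Suc_eq eval_nat_numeral)
  ultimately show ?thesis
    by (simp add: card_image)
qed

lemma poly_fun_diff: "f \<in> poly_fun \<Longrightarrow> g \<in> poly_fun \<Longrightarrow> (\<lambda>p. f p - g p) \<in> poly_fun"
  using poly_fun.padd[OF _ poly_fun.pmult[OF poly_fun.pconst[of "-1"]], of f g] by simp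

lemma poly_fun_sum:
  "finite A \<Longrightarrow> (\<And>a. a \<in> A \<Longrightarrow> f a \<in> poly_fun) \<Longrightarrow> (\<lambda>p. \<Sum>a\<in>A. f a p) \<in> poly_fun"
proof (induction A rule: finite_induct)
  case empty
  then show ?case
    using poly_fun.pconst[of 0] by simp
next
  case (insert a A)
  then have "(\<lambda>p. f a p + (\<Sum>a\<in>A. f a p)) \<in> poly_fun"
    by (intro poly_fun.padd) auto
  then show ?case
    using insert by simp
qed

lemma poly_fun_xc: "(\<lambda>p. xc (snd p) k) \<in> poly_fun"
  unfolding xc_def by (rule poly_fun.px)

lemma poly_fun_S_quadric: "(\<lambda>p. S_quadric (snd p) i j) \<in> poly_fun"
  unfolding S_quadric_def Let_def power2_eq_square
  by (intro poly_fun_diff poly_fun_sum poly_fun.pmult poly_fun_xc) auto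

lemma zariski_closed_S_comp: "zariski_closed (S_comp i j)"
proof -
  let ?P = "{\<lambda>p. fst p, \<lambda>p. xc (snd p) i - xc (snd p) j, \<lambda>p. S_quadric (snd p) i j}"
  have "?P \<subseteq> poly_fun"
    using poly_fun.pw poly_fun_diff[OF poly_fun_xc poly_fun_xc] poly_fun_S_quadric by auto
  moreover have "S_comp i j = {p. \<forall>f\<in>?P. f p = 0}"
    by (auto simp: mem_S_comp_iff S_cond_def)
  ultimately show ?thesis
    unfolding zariski_closed_def by blast
qed

definition poly_curve :: "(complex \<Rightarrow> pt) \<Rightarrow> bool" where
  "poly_curve g \<longleftrightarrow> (\<exists>q. \<forall>t. fst (g t) = poly q t) \<and> (\<forall>k. \<exists>q. \<forall>t. snd (g t) $ k = poly q t)"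

lemma poly_fun_comp_poly_curve: "f \<in> poly_fun \<Longrightarrow> poly_curve g \<Longrightarrow> \<exists>q. \<forall>t. f (g t) = poly q t"
proof (induction f rule: poly_fun.induct)
  case (pconst c)
  show ?case
    by (intro exI[of _ "[:c:]"]) simp
next
  case pw
  then show ?case
    unfolding poly_curve_def by simp
next
  case (px k)
  then show ?case
    unfolding poly_curve_def by simp
next
  case (padd f\<^sub>1 f\<^sub>2)
  then obtain q\<^sub>1 q\<^sub>2 where "\<forall>t. f\<^sub>1 (g t) = poly q\<^sub>1 t" "\<forall>t. f\<^sub>2 (g t) = poly q\<^sub>2 t"
    by blast
  then show ?case
    by (intro exI[of _ "q\<^sub>1 + q\<^sub>2"]) simp
next
  case (pmult f\<^sub>1 f\<^sub>2)
  then obtain q\<^sub>1 q\<^sub>2 where "\<forall>t. f\<^sub>1 (g t) = poly q\<^sub>1 t" "\<forall>t. f\<^sub>2 (g t) = poly q\<^sub>2 t"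
    by blast
  then show ?case
    by (intro exI[of _ "q\<^sub>1 * q\<^sub>2"]) simp
qed

lemma poly_curve_S_param:
  "poly_curve (\<lambda>t. S_param i j k l (y\<^sub>0 + t * y\<^sub>1) (a\<^sub>0 + t * a\<^sub>1) (b\<^sub>0 + t * b\<^sub>1))"
  unfolding poly_curve_def
proof (intro conjI allI)
  show "\<exists>q. \<forall>t. fst (S_param i j k l (y\<^sub>0 + t * y\<^sub>1) (a\<^sub>0 + t * a\<^sub>1) (b\<^sub>0 + t * b\<^sub>1)) = poly q t"
    by (intro exI[of _ 0]) (simp add: S_param_def)
next
  fix t' :: 5
  let ?Y = "[:y\<^sub>0, y\<^sub>1:]" and ?A = "[:a\<^sub>0, a\<^sub>1:]" and ?B = "[:b\<^sub>0, b\<^sub>1:]"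
  show "\<exists>q. \<forall>t. snd (S_param i j k l (y\<^sub>0 + t * y\<^sub>1) (a\<^sub>0 + t * a\<^sub>1) (b\<^sub>0 + t * b\<^sub>1)) $ t' = poly q t"
    by (intro exI[of _ "if t' = of_nat i \<or> t' = of_nat j then ?Y else if t' = of_nat k then ?A\<^sup>2
         else if t' = of_nat l then ?B\<^sup>2 else (?A + ?B)\<^sup>2"])
       (simp add: S_param_def algebra_simps)
qed

lemma poly_curve_factor_vanishes:
  assumes "poly_curve \<gamma>" "f \<in> poly_fun" "g \<in> poly_fun" "\<And>t. f (\<gamma> t) = 0 \<or> g (\<gamma> t) = 0"
  shows "(\<forall>t. f (\<gamma> t) = 0) \<or> (\<forall>t. g (\<gamma> t) = 0)"
proof -
  obtain qf qg where qf: "\<forall>t. f (\<gamma> t) = poly qf t" and qg: "\<forall>t. g (\<gamma> t) = poly qg t"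
    using poly_fun_comp_poly_curve assms(1-3) by metis
  then have "\<forall>t. poly (qf * qg) t = 0"
    using assms(4) by simp
  then have "qf = 0 \<or> qg = 0"
    using poly_all_0_iff_0 by (metis mult_eq_0_iff)
  then show ?thesis
    using qf qg by auto
qed

lemma zariski_irreducible_S_comp:
  assumes "i < j" "j < 5"
  shows "zariski_irreducible (S_comp i j)"
proof -
  have "i < 5" "i \<noteq> j"
    using assms by simp_all
  then obtain k l m where klm: "distinct [i, j, k, l, m]" "{..<5} = {i, j, k, l, m}"
    "\<And>x. S_quadric x i j = heron (xc x k) (xc x l) (xc x m)"
    using obtain_complement_triple assms(2) by metis
  have "S_comp i j \<subseteq> A \<or> S_comp i j \<subseteq> B"
    if A: "zariski_closed A" and B: "zariski_closed B" and sub: "S_comp i j \<subseteq> A \<union> B" for A B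
  proof (rule ccontr)
    assume "\<not> (S_comp i j \<subseteq> A \<or> S_comp i j \<subseteq> B)"
    then obtain pA pB where pA: "pA \<in> S_comp i j" "pA \<notin> A" and pB: "pB \<in> S_comp i j" "pB \<notin> B"
      by blast
    obtain PA PB where PA: "PA \<subseteq> poly_fun" "A = {p. \<forall>f\<in>PA. f p = 0}"
      and PB: "PB \<subseteq> poly_fun" "B = {p. \<forall>f\<in>PB. f p = 0}"
      using A B unfolding zariski_closed_def by blast
    obtain f g where f: "f \<in> PA" "f pA \<noteq> 0" and g: "g \<in> PB" "g pB \<noteq> 0"
      using pA(2) pB(2) PA(2) PB(2) by blast
    obtain yA aA bA yB aB bB where
      uA: "pA = S_param i j k l yA aA bA" and uB: "pB = S_param i j k l yB aB bB"
      using S_param_surj[OF klm pA(1)] S_param_surj[OF klm pB(1)] by blast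
    define \<gamma> where "\<gamma> = (\<lambda>t. S_param i j k l (yA + t * (yB - yA)) (aA + t * (aB - aA)) (bA + t * (bB - bA)))"
    have curve: "poly_curve \<gamma>"
      unfolding \<gamma>_def by (rule poly_curve_S_param)
    have "f (\<gamma> t) = 0 \<or> g (\<gamma> t) = 0" for t
      using S_param_mem[OF klm] sub PA(2) PB(2) f(1) g(1) unfolding \<gamma>_def by blast
    then have "(\<forall>t. f (\<gamma> t) = 0) \<or> (\<forall>t. g (\<gamma> t) = 0)"
      using poly_curve_factor_vanishes[OF curve] f(1) g(1) PA(1) PB(1) by blast
    moreover have "\<gamma> 0 = pA" "\<gamma> 1 = pB"
      unfolding \<gamma>_def uA uB by simp_all
    ultimately show False
      using f(2) g(2) by metis
  qed
  moreover have "S_comp i j \<noteq> {}"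
    using S_param_mem[OF klm] by blast
  ultimately show ?thesis
    unfolding zariski_irreducible_def by blast
qed

theorem mainTheorem8:
  shows "sing_cone_O = (\<Union>{S_comp i j | i j. i < j \<and> j < 5})
    \<and> card {S_comp i j | i j. i < j \<and> j < 5} = 10
    \<and> (\<forall>i j. i < j \<and> j < 5 \<longrightarrow> zariski_closed (S_comp i j) \<and> zariski_irreducible (S_comp i j))
    \<and> (\<forall>i j k l. i < j \<and> j < 5 \<and> k < l \<and> l < 5 \<and> (i, j) \<noteq> (k, l)
         \<longrightarrow> \<not> S_comp i j \<subseteq> S_comp k l)"
proof (intro conjI allI impI)
  fix i j k l :: nat
  assume "i < j \<and> j < 5 \<and> k < l \<and> l < 5 \<and> (i, j) \<noteq> (k, l)"
  then show "\<not> S_comp i j \<subseteq> S_comp k l"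
    using S_comp_not_subset by blast
qed (auto simp: sing_cone_O_eq_Union_S_comp card_S_comps zariski_closed_S_comp zariski_irreducible_S_comp)

end
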